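(* For any two configurations $A,B\in\mathcal{F}_2$, there exists a feasible schedule $M$ from $A$ to $B$ over some interval $[t_0,t_1]$ of minimum makespan that does not repeat an ordering: for each of the four orderings $O$, the set $\{t\in[t_0,t_1]: M(t)\in O\}$ is empty or an interval (equivalently, the sequence of orderings visited by $M$ is a simple path in the transition graph).
   Context: Robots are axis-parallel unit squares: a robot at $p$ occupies $p+\boxdot$, $\boxdot=\{q:\|q\|_\infty\le1/2\}$. Distances use the $L_1$ norm. A configuration of two robots is a pair $(p_1,p_2)$ with $\|p_1-p_2\|_\infty\ge 1$; $\mathcal{F}_2$ is their set. A trajectory over $T=[t_0,t_1]$ is a $1$-Lipschitz (w.r.t. $L_1$) map $m:T\to\mathbb{R}^2$ with polygonal-chain image; a schedule $M=(m_1,m_2)$ is feasible if $M(t)\in\mathcal{F}_2$ for all $t$; its makespan is $t_1-t_0$. The four orderings are $\mathcal{F}_2^{\rightarrow}=\{(p_1,p_2)\in\mathcal{F}_2: x(p_1)\ge x(p_2)+1\}$, $\mathcal{F}_2^{\leftarrow}=\{x(p_2)\ge x(p_1)+1\}$, $\mathcal{F}_2^{\uparrow}=\{y(p_1)\ge y(p_2)+1\}$, $\mathcal{F}_2^{\downarrow}=\{y(p_2)\ge y(p_1)+1\}$; they cover $\mathcal{F}_2$. The transition graph is the intersection graph of the four orderings (a four-cycle: each horizontal ordering intersects each vertical one). *)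

theory Defs
  imports "HOL-Analysis.Analysis"
begin

type_synonym pt = "real \<times> real"

definition l1dist :: "pt \<Rightarrow> pt \<Rightarrow> real" where
  "l1dist p q = \<bar>fst p - fst q\<bar> + \<bar>snd p - snd q\<bar>"

text \<open>Configurations of two unit-square robots: L-infinity distance at least 1.\<close>
definition F2 :: "(pt \<times> pt) set" where
  "F2 = {(p1, p2). max \<bar>fst p1 - fst p2\<bar> \<bar>snd p1 - snd p2\<bar> \<ge> 1}"

definition polygonal_chain :: "pt set \<Rightarrow> bool" where
  "polygonal_chain S \<longleftrightarrow> (\<exists>ps. ps \<noteq> [] \<and>
      S = set ps \<union> (\<Union>i\<in>{i. Suc i < length ps}. closed_segment (ps ! i) (ps ! Suc i)))"

definition trajectory :: "(real \<Rightarrow> pt) \<Rightarrow> real \<Rightarrow> real \<Rightarrow> bool" where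
  "trajectory m t0 t1 \<longleftrightarrow> t0 \<le> t1 \<and>
     (\<forall>s\<in>{t0..t1}. \<forall>t\<in>{t0..t1}. l1dist (m s) (m t) \<le> \<bar>s - t\<bar>) \<and>
     polygonal_chain (m ` {t0..t1})"

definition feasible_schedule :: "(real \<Rightarrow> pt \<times> pt) \<Rightarrow> real \<Rightarrow> real \<Rightarrow> bool" where
  "feasible_schedule M t0 t1 \<longleftrightarrow>
     trajectory (\<lambda>t. fst (M t)) t0 t1 \<and> trajectory (\<lambda>t. snd (M t)) t0 t1 \<and>
     (\<forall>t\<in>{t0..t1}. M t \<in> F2)"

definition schedule_from_to :: "(real \<Rightarrow> pt \<times> pt) \<Rightarrow> real \<Rightarrow> real \<Rightarrow> pt \<times> pt \<Rightarrow> pt \<times> pt \<Rightarrow> bool" where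
  "schedule_from_to M t0 t1 A B \<longleftrightarrow> feasible_schedule M t0 t1 \<and> M t0 = A \<and> M t1 = B"

definition ord_right :: "(pt \<times> pt) set" where
  "ord_right = {(p1, p2). (p1, p2) \<in> F2 \<and> fst p1 \<ge> fst p2 + 1}"
definition ord_left :: "(pt \<times> pt) set" where
  "ord_left = {(p1, p2). (p1, p2) \<in> F2 \<and> fst p2 \<ge> fst p1 + 1}"
definition ord_up :: "(pt \<times> pt) set" where
  "ord_up = {(p1, p2). (p1, p2) \<in> F2 \<and> snd p1 \<ge> snd p2 + 1}"
definition ord_down :: "(pt \<times> pt) set" where
  "ord_down = {(p1, p2). (p1, p2) \<in> F2 \<and> snd p2 \<ge> snd p1 + 1}"

definition orderings :: "(pt \<times> pt) set set" where
  "orderings = {ord_right, ord_left, ord_up, ord_down}"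

end

(*
  Measure a displacement of the pair of robots by cnorm, the larger of the two L1 norms; a feasible
  schedule is then a cnorm-1-Lipschitz path in F2. Call a list of configurations a chain if
  consecutive configurations lie in a common ordering. Orderings are half-planes, hence convex, so
  traversing a chain at unit speed is a feasible schedule whose makespan is the length of the chain.
  Conversely, cutting a schedule at its last visit to each ordering yields a chain with at most five
  vertices that is no longer than the makespan. Compactness gives a shortest five-vertex chain, and
  one with fewest moves never re-enters an ordering it has left; since the complement of an
  ordering is convex too, its traversal spends an interval of time in each ordering.
*)

theory Submission
  imports Defs
begin

section \<open>A norm on configurations\<close>

definition l1norm :: "pt \<Rightarrow> real" where
  "l1norm p = \<bar>fst p\<bar> + \<bar>snd p\<bar>"

definition cnorm :: "pt \<times> pt \<Rightarrow> real" where
  "cnorm z = max (l1norm (fst z)) (l1norm (snd z))"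

lemma l1dist_eq_l1norm: "l1dist p q = l1norm (p - q)"
  by (simp add: l1dist_def l1norm_def)

lemma l1norm_triangle: "l1norm (p + q) \<le> l1norm p + l1norm q"
  by (simp add: l1norm_def abs_triangle_ineq add_mono)

lemma cnorm_nonneg: "0 \<le> cnorm z"
  by (simp add: cnorm_def l1norm_def le_max_iff_disj)

lemma cnorm_eq_0_iff: "cnorm z = 0 \<longleftrightarrow> z = 0"
  by (cases z) (auto simp: cnorm_def l1norm_def max_def zero_prod_def)

lemma cnorm_zero [simp]: "cnorm 0 = 0"
  by (simp add: cnorm_eq_0_iff)

lemma cnorm_triangle: "cnorm (a + b) \<le> cnorm a + cnorm b"
  using l1norm_triangle[of "fst a" "fst b"] l1norm_triangle[of "snd a" "snd b"]
  by (auto simp: cnorm_def max_def)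

lemma cnorm_diff_triangle: "cnorm (c - a) \<le> cnorm (b - a) + cnorm (c - b)"
  using cnorm_triangle[of "b - a" "c - b"] by simp

lemma cnorm_scaleR: "cnorm (u *\<^sub>R z) = \<bar>u\<bar> * cnorm z"
  by (simp add: cnorm_def l1norm_def abs_mult max_mult_distrib_left flip: distrib_left)

lemma cnorm_minus_commute: "cnorm (a - b) = cnorm (b - a)"
  by (simp add: cnorm_def l1norm_def abs_minus_commute)

lemma l1dist_fst_le_cnorm: "l1dist (fst a) (fst b) \<le> cnorm (a - b)"
  and l1dist_snd_le_cnorm: "l1dist (snd a) (snd b) \<le> cnorm (a - b)"
  by (simp_all add: cnorm_def l1dist_eq_l1norm)

lemma norm_le_cnorm: "norm z \<le> 2 * cnorm z"
proof -
  have l1: "norm p \<le> l1norm p" for p :: pt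
    using norm_Pair_le[of "fst p" "snd p"] by (simp add: l1norm_def)
  have "norm z \<le> norm (fst z) + norm (snd z)"
    using norm_Pair_le[of "fst z" "snd z"] by simp
  also have "\<dots> \<le> l1norm (fst z) + l1norm (snd z)"
    by (intro add_mono l1)
  also have "\<dots> \<le> 2 * cnorm z"
    by (simp add: cnorm_def)
  finally show ?thesis .
qed

lemma continuous_on_cnorm [continuous_intros]:
  "continuous_on S f \<Longrightarrow> continuous_on S (\<lambda>x. cnorm (f x))"
  unfolding cnorm_def l1norm_def by (intro continuous_intros)

section \<open>Orderings are half-planes\<close>

lemma ordering_halfspace: "Q \<in> orderings \<Longrightarrow> \<exists>w. Q = {z. 1 \<le> inner w z}"
proof -
  have "ord_right = {z. 1 \<le> inner ((1, 0), (-1, 0)) z}"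
    "ord_left = {z. 1 \<le> inner ((-1, 0), (1, 0)) z}"
    "ord_up = {z. 1 \<le> inner ((0, 1), (0, -1)) z}" "ord_down = {z. 1 \<le> inner ((0, -1), (0, 1)) z}"
    by (auto simp: ord_right_def ord_left_def ord_up_def ord_down_def F2_def le_max_iff_disj)
  then show "Q \<in> orderings \<Longrightarrow> ?thesis"
    unfolding orderings_def by blast
qed

lemma closed_ordering: "Q \<in> orderings \<Longrightarrow> closed Q"
  using ordering_halfspace closed_halfspace_ge by metis

lemma convex_ordering: "Q \<in> orderings \<Longrightarrow> convex Q"
  using ordering_halfspace convex_halfspace_ge by metis

lemma convex_Compl_ordering: "Q \<in> orderings \<Longrightarrow> convex (- Q)"
proof -
  assume "Q \<in> orderings"
  then obtain w where "Q = {z. 1 \<le> inner w z}"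
    using ordering_halfspace by blast
  then have "- Q = {z. inner w z < 1}"
    by auto
  then show ?thesis
    using convex_halfspace_lt by metis
qed

lemma F2_eq_Union_orderings: "F2 = \<Union>orderings"
  by (auto simp: orderings_def ord_right_def ord_left_def ord_up_def ord_down_def F2_def
      le_max_iff_disj abs_real_def split: if_splits)

lemma ordering_subset_F2: "Q \<in> orderings \<Longrightarrow> Q \<subseteq> F2"
  by (auto simp: F2_eq_Union_orderings)

lemma finite_orderings: "finite orderings"
  by (simp add: orderings_def)

lemma card_orderings_le: "card orderings \<le> 4"
proof -
  have "orderings = set [ord_right, ord_left, ord_up, ord_down]"
    by (simp add: orderings_def)
  then show ?thesis
    using card_length[of "[ord_right, ord_left, ord_up, ord_down]"] by simp
qed

lemma orderings_common_neighbour: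
  assumes "Q \<in> orderings" "Q' \<in> orderings"
  shows "\<exists>R\<in>orderings. Q \<inter> R \<noteq> {} \<and> R \<inter> Q' \<noteq> {}"
proof -
  have "((1, 1), (0, 0)) \<in> ord_right \<inter> ord_up" "((1, -1), (0, 0)) \<in> ord_right \<inter> ord_down"
    "((-1, 1), (0, 0)) \<in> ord_left \<inter> ord_up" "((-1, -1), (0, 0)) \<in> ord_left \<inter> ord_down"
    by (simp_all add: ord_right_def ord_left_def ord_up_def ord_down_def F2_def)
  then have "ord_right \<inter> ord_up \<noteq> {}" "ord_right \<inter> ord_down \<noteq> {}"
    "ord_left \<inter> ord_up \<noteq> {}" "ord_left \<inter> ord_down \<noteq> {}"
    by blast+
  then show ?thesis
    using assms unfolding orderings_def by (simp add: Int_commute) blast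
qed

section \<open>Chains\<close>

definition legs :: "'a list \<Rightarrow> ('a \<times> 'a) list" where
  "legs xs = zip xs (tl xs)"

lemma legs_simps [simp]:
  "legs [] = []" "legs [x] = []" "legs (x # y # r) = (x, y) # legs (y # r)"
  by (simp_all add: legs_def)

lemma legs_append_Cons: "legs (xs @ y # ys) = legs (xs @ [y]) @ legs (y # ys)"
  by (induction xs rule: induct_list012) auto

lemma legs_replicate: "legs (replicate (Suc n) x) = replicate n (x, x)"
  by (induction n) auto

lemma legs_straight: "legs (x # replicate n x @ [y]) = replicate n (x, x) @ [(x, y)]"
  by (induction n) auto

definition chain_length :: "(pt \<times> pt) list \<Rightarrow> real" where
  "chain_length xs = (\<Sum>(x, y)\<leftarrow>legs xs. cnorm (y - x))"

definition is_chain :: "(pt \<times> pt) list \<Rightarrow> bool" where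
  "is_chain xs \<longleftrightarrow> (\<forall>(x, y)\<in>set (legs xs). \<exists>Q\<in>orderings. x \<in> Q \<and> y \<in> Q)"

definition moves :: "'a list \<Rightarrow> nat" where
  "moves xs = length (filter (\<lambda>(x, y). x \<noteq> y) (legs xs))"

lemma chain_length_simps [simp]:
  "chain_length [] = 0" "chain_length [x] = 0"
  "chain_length (x # y # r) = cnorm (y - x) + chain_length (y # r)"
  by (simp_all add: chain_length_def)

lemma is_chain_simps [simp]:
  "is_chain []" "is_chain [x]"
  "is_chain (x # y # r) \<longleftrightarrow> (\<exists>Q\<in>orderings. x \<in> Q \<and> y \<in> Q) \<and> is_chain (y # r)"
  by (simp_all add: is_chain_def)

lemma chain_length_nonneg: "0 \<le> chain_length xs"
  unfolding chain_length_def
  by (induction xs rule: induct_list012) (auto intro: add_nonneg_nonneg cnorm_nonneg)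

lemma cnorm_le_chain_length: "z \<in> set xs \<Longrightarrow> cnorm (z - hd xs) \<le> chain_length xs"
proof (induction xs rule: induct_list012)
  case (3 x y r)
  show ?case
  proof (cases "z = x")
    case False
    then have "cnorm (z - y) \<le> chain_length (y # r)"
      using 3 by simp
    then show ?thesis
      using cnorm_diff_triangle[where a = x and b = y and c = z] by simp
  qed (simp add: cnorm_nonneg chain_length_nonneg add_nonneg_nonneg)
qed auto

lemma moves_pos: "xs \<noteq> [] \<Longrightarrow> last xs \<noteq> hd xs \<Longrightarrow> 0 < moves xs"
  by (induction xs rule: induct_list012) (auto simp: moves_def split: if_splits)

lemma chain_length_append_Cons:
  "chain_length (xs @ y # ys) = chain_length (xs @ [y]) + chain_length (y # ys)"
  unfolding chain_length_def legs_append_Cons[of xs y ys] by simp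

lemma is_chain_append_Cons:
  "is_chain (xs @ y # ys) \<longleftrightarrow> is_chain (xs @ [y]) \<and> is_chain (y # ys)"
  unfolding is_chain_def legs_append_Cons[of xs y ys] set_append ball_Un ..

lemma moves_append_Cons: "moves (xs @ y # ys) = moves (xs @ [y]) + moves (y # ys)"
  unfolding moves_def legs_append_Cons[of xs y ys] by simp

lemma chain_length_replicate [simp]: "chain_length (replicate n x) = 0"
  by (cases n) (simp_all add: chain_length_def legs_replicate sum_list_replicate del: replicate_Suc)

lemma is_chain_replicate: "x \<in> F2 \<Longrightarrow> is_chain (replicate n x)"
  by (cases n)
    (auto simp: is_chain_def legs_replicate F2_eq_Union_orderings simp del: replicate_Suc)

lemma pad_chain:
  assumes "xs \<noteq> []" "is_chain xs" "last xs \<in> F2"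
  shows "is_chain (xs @ replicate n (last xs))"
    and "chain_length (xs @ replicate n (last xs)) = chain_length xs"
proof -
  have split: "xs @ replicate n (last xs) = butlast xs @ last xs # replicate n (last xs)"
    using assms(1) by simp
  have butlast: "butlast xs @ [last xs] = xs"
    using assms(1) by simp
  have pad: "is_chain (last xs # replicate n (last xs))"
    using is_chain_replicate[OF assms(3), of "Suc n"] by simp
  show "is_chain (xs @ replicate n (last xs))"
    using is_chain_append_Cons[of "butlast xs" "last xs" "replicate n (last xs)"] assms(2) pad
    unfolding split butlast by blast
  show "chain_length (xs @ replicate n (last xs)) = chain_length xs"
    using chain_length_append_Cons[of "butlast xs" "last xs" "replicate n (last xs)"]
      chain_length_replicate[of "Suc n" "last xs"]
    unfolding split butlast by simp
qed

fun no_reentry :: "'a set \<Rightarrow> 'a list \<Rightarrow> bool" where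
  "no_reentry Q (x # y # r) \<longleftrightarrow> (x \<in> Q \<and> y \<notin> Q \<longrightarrow> set r \<inter> Q = {}) \<and> no_reentry Q (y # r)"
| "no_reentry Q _ \<longleftrightarrow> True"

lemma reentry_split:
  "\<not> no_reentry Q xs \<Longrightarrow> \<exists>us x ms y ws. xs = us @ x # ms @ y # ws \<and> x \<in> Q \<and> y \<in> Q \<and> \<not> set ms \<subseteq> Q"
proof (induction xs rule: induct_list012)
  case (3 x y r)
  show ?case
  proof (cases "no_reentry Q (y # r)")
    case True
    then have "x \<in> Q" "y \<notin> Q" "set r \<inter> Q \<noteq> {}"
      using "3.prems" by auto
    moreover obtain z r1 r2 where "r = r1 @ z # r2" "z \<in> Q"
      using \<open>set r \<inter> Q \<noteq> {}\<close> by (metis disjoint_iff split_list)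
    ultimately show ?thesis
      by (intro exI[of _ "[]"] exI[of _ x] exI[of _ "y # r1"] exI[of _ z] exI[of _ r2]) auto
  next
    case False
    then obtain us x' ms y' ws
      where "y # r = us @ x' # ms @ y' # ws" "x' \<in> Q" "y' \<in> Q" "\<not> set ms \<subseteq> Q"
      using "3.IH"(2) by blast
    then show ?thesis
      by (intro exI[of _ "x # us"]) auto
  qed
qed auto

lemma chain_length_split3: "chain_length (us @ x # ms @ y # ws) =
    chain_length (us @ [x]) + chain_length (x # ms @ [y]) + chain_length (y # ws)"
  using chain_length_append_Cons[of us x "ms @ y # ws"] chain_length_append_Cons[of "x # ms" y ws]
  by simp

lemma is_chain_split3: "is_chain (us @ x # ms @ y # ws) \<longleftrightarrow>
    is_chain (us @ [x]) \<and> is_chain (x # ms @ [y]) \<and> is_chain (y # ws)"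
  using is_chain_append_Cons[of us x "ms @ y # ws"] is_chain_append_Cons[of "x # ms" y ws]
  by simp

lemma moves_split3:
  "moves (us @ x # ms @ y # ws) = moves (us @ [x]) + moves (x # ms @ [y]) + moves (y # ws)"
  using moves_append_Cons[of us x "ms @ y # ws"] moves_append_Cons[of "x # ms" y ws]
  by simp

lemma shortcut_chain:
  assumes chain: "is_chain (us @ x # ms @ y # ws)" and Q: "Q \<in> orderings" "x \<in> Q" "y \<in> Q"
  defines "xs' \<equiv> us @ x # replicate (length ms) x @ y # ws"
  shows "is_chain xs'"
    and "chain_length xs' \<le> chain_length (us @ x # ms @ y # ws)"
    and "\<not> set ms \<subseteq> Q \<Longrightarrow> moves xs' < moves (us @ x # ms @ y # ws)"
proof -
  have "is_chain (x # replicate (length ms) x @ [y])"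
    using Q unfolding is_chain_def legs_straight by auto
  then show "is_chain xs'"
    using chain unfolding xs'_def is_chain_split3 by blast
  have "chain_length (x # replicate (length ms) x @ [y]) = cnorm (y - x)"
    by (simp add: chain_length_def legs_straight sum_list_replicate)
  moreover have "cnorm (y - x) \<le> chain_length (x # ms @ [y])"
    using cnorm_le_chain_length[of y "x # ms @ [y]"] by simp
  ultimately show "chain_length xs' \<le> chain_length (us @ x # ms @ y # ws)"
    unfolding xs'_def chain_length_split3 by simp
  assume "\<not> set ms \<subseteq> Q"
  then obtain m1 z m2 where z: "ms = m1 @ z # m2" "z \<notin> Q"
    by (metis split_list subsetI)
  have "0 < moves (x # m1 @ [z])" "0 < moves (z # m2 @ [y])"
    using z Q by (auto intro!: moves_pos)
  moreover have "moves (x # ms @ [y]) = moves (x # m1 @ [z]) + moves (z # m2 @ [y])"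
    using z moves_append_Cons[of "x # m1" z "m2 @ [y]"] by simp
  moreover have "moves (x # replicate (length ms) x @ [y]) \<le> 1"
    by (simp add: moves_def legs_straight)
  ultimately show "moves xs' < moves (us @ x # ms @ y # ws)"
    unfolding xs'_def moves_split3 by simp
qed

section \<open>Traversing a chain\<close>

definition polyline :: "'a::real_vector list \<Rightarrow> 'a set" where
  "polyline ps = set ps \<union> (\<Union>(p, q)\<in>set (legs ps). closed_segment p q)"

lemma polyline_simps [simp]:
  "polyline [p] = {p}" "polyline (p # q # r) = closed_segment p q \<union> polyline (q # r)"
  by (auto simp: polyline_def)

lemma set_legs: "set (legs xs) = (\<lambda>i. (xs ! i, xs ! Suc i)) ` {i. Suc i < length xs}"
  by (force simp: legs_def set_zip nth_tl)

lemma polygonal_chain_polyline: "ps \<noteq> [] \<Longrightarrow> polygonal_chain (polyline ps)"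
  unfolding polygonal_chain_def polyline_def set_legs by (rule exI[of _ ps]) simp

lemma polyline_subset_convex_hull: "polyline ps \<subseteq> convex hull (set ps)"
proof -
  have "closed_segment (ps ! i) (ps ! Suc i) \<subseteq> convex hull (set ps)" if "Suc i < length ps" for i
    unfolding segment_convex_hull using that by (intro hull_mono) auto
  then show ?thesis
    unfolding polyline_def set_legs by (auto intro: hull_inc)
qed

definition cnorm_lipschitz_on :: "real set \<Rightarrow> (real \<Rightarrow> pt \<times> pt) \<Rightarrow> bool" where
  "cnorm_lipschitz_on S f \<longleftrightarrow> (\<forall>s\<in>S. \<forall>t\<in>S. cnorm (f s - f t) \<le> \<bar>s - t\<bar>)"

lemma cnorm_lipschitz_on_glue:
  assumes "a \<le> b" "b \<le> c" "cnorm_lipschitz_on {a..b} f" "cnorm_lipschitz_on {b..c} f"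
  shows "cnorm_lipschitz_on {a..c} f"
  unfolding cnorm_lipschitz_on_def
proof (intro ballI)
  fix s t
  assume s: "s \<in> {a..c}" and t: "t \<in> {a..c}"
  have across: "cnorm (f u - f v) \<le> \<bar>u - v\<bar>" if "u \<in> {a..b}" "v \<in> {b..c}" for u v
  proof -
    have "cnorm (f u - f v) \<le> cnorm (f u - f b) + cnorm (f b - f v)"
      using cnorm_triangle[of "f u - f b" "f b - f v"] by simp
    also have "\<dots> \<le> \<bar>u - b\<bar> + \<bar>b - v\<bar>"
      using assms(3)[unfolded cnorm_lipschitz_on_def, rule_format, of u b]
        assms(4)[unfolded cnorm_lipschitz_on_def, rule_format, of b v] assms(1,2) that
      by simp
    finally show ?thesis
      using that by simp
  qed
  consider "s \<le> b" "t \<le> b" | "b \<le> s" "b \<le> t" | "s \<le> b" "b \<le> t" | "b \<le> s" "t \<le> b"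
    by linarith
  then show "cnorm (f s - f t) \<le> \<bar>s - t\<bar>"
  proof cases
    case 4
    then show ?thesis
      using across[of t s] s t by (simp add: cnorm_minus_commute abs_minus_commute)
  qed (use assms s t across in \<open>auto simp: cnorm_lipschitz_on_def\<close>)
qed

text \<open>On a leg of length zero only
  \<open>t = 0\<close> takes the first branch, where the junk quotient \<open>0 / 0 = 0\<close> gives the right point.\<close>

fun chain_path :: "(pt \<times> pt) list \<Rightarrow> real \<Rightarrow> pt \<times> pt" where
  "chain_path (x # y # r) t =
     (if t \<le> cnorm (y - x) then x + (t / cnorm (y - x)) *\<^sub>R (y - x)
      else chain_path (y # r) (t - cnorm (y - x)))"
| "chain_path [x] t = x"
| "chain_path [] t = 0"

lemma chain_path_0: "xs \<noteq> [] \<Longrightarrow> chain_path xs 0 = hd xs"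
  by (induction xs rule: induct_list012) (auto simp: cnorm_nonneg)

lemma chain_path_shift:
  assumes "cnorm (y - x) \<le> t"
  shows "chain_path (x # y # r) t = chain_path (y # r) (t - cnorm (y - x))"
proof (cases "t = cnorm (y - x)")
  case True
  have "x + (cnorm (y - x) / cnorm (y - x)) *\<^sub>R (y - x) = y"
    by (cases "cnorm (y - x) = 0") (auto simp: cnorm_eq_0_iff)
  then show ?thesis
    using True by (simp add: chain_path_0)
qed (use assms in simp)

lemma chain_path_chain_length: "xs \<noteq> [] \<Longrightarrow> chain_path xs (chain_length xs) = last xs"
  by (induction xs rule: induct_list012)
    (auto simp: chain_path_shift chain_length_nonneg simp del: chain_path.simps(1))

lemma cnorm_lipschitz_on_chain_path: "cnorm_lipschitz_on {0..chain_length xs} (chain_path xs)"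
proof (induction xs rule: induct_list012)
  case (3 x y r)
  define c where "c = cnorm (y - x)"
  have first: "cnorm_lipschitz_on {0..c} (chain_path (x # y # r))"
    unfolding cnorm_lipschitz_on_def
  proof (intro ballI)
    fix s t
    assume "s \<in> {0..c}" "t \<in> {0..c}"
    then have "chain_path (x # y # r) s - chain_path (x # y # r) t = ((s - t) / c) *\<^sub>R (y - x)"
      by (simp add: c_def algebra_simps diff_divide_distrib)
    then show "cnorm (chain_path (x # y # r) s - chain_path (x # y # r) t) \<le> \<bar>s - t\<bar>"
      by (cases "c = 0") (simp_all add: cnorm_scaleR abs_div c_def cnorm_nonneg)
  qed
  have rest: "cnorm_lipschitz_on {c..c + chain_length (y # r)} (chain_path (x # y # r))"
    unfolding cnorm_lipschitz_on_def
  proof (intro ballI)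
    fix s t
    assume "s \<in> {c..c + chain_length (y # r)}" "t \<in> {c..c + chain_length (y # r)}"
    then show "cnorm (chain_path (x # y # r) s - chain_path (x # y # r) t) \<le> \<bar>s - t\<bar>"
      using "3.IH"(2)[unfolded cnorm_lipschitz_on_def, rule_format, of "s - c" "t - c"]
      by (simp add: chain_path_shift c_def del: chain_path.simps(1))
  qed
  show ?case
    using cnorm_lipschitz_on_glue[OF _ _ first rest]
    by (simp add: c_def cnorm_nonneg chain_length_nonneg del: chain_path.simps(1))
qed (auto simp: cnorm_lipschitz_on_def)

lemma image_leg:
  fixes p q :: "'a::real_vector"
  assumes "0 < c"
  shows "(\<lambda>t. p + (t / c) *\<^sub>R (q - p)) ` {0..c} = closed_segment p q"
proof -
  have eq: "(\<lambda>t. p + (t / c) *\<^sub>R (q - p)) = (\<lambda>u. (1 - u) *\<^sub>R p + u *\<^sub>R q) \<circ> (\<lambda>t. t / c)"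
    by (auto simp: algebra_simps)
  have "(\<lambda>t. t / c) ` {0..c} = {0..1}"
    using assms by simp
  then show ?thesis
    unfolding eq image_comp[symmetric] closed_segment_image_interval by simp
qed

lemma image_chain_path_first_leg:
  assumes "linear \<pi>"
  shows "(\<lambda>t. \<pi> (chain_path (x # y # r) t)) ` {0..cnorm (y - x)} = closed_segment (\<pi> x) (\<pi> y)"
proof (cases "cnorm (y - x) = 0")
  case True
  then show ?thesis
    by (auto simp: cnorm_eq_0_iff)
next
  case False
  then have c: "0 < cnorm (y - x)"
    using cnorm_nonneg[of "y - x"] by simp
  have "(\<lambda>t. \<pi> (chain_path (x # y # r) t)) ` {0..cnorm (y - x)} =
      (\<lambda>t. \<pi> x + (t / cnorm (y - x)) *\<^sub>R (\<pi> y - \<pi> x)) ` {0..cnorm (y - x)}"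
    using assms by (intro image_cong) (auto simp: linear_add linear_scale linear_diff)
  then show ?thesis
    using image_leg[OF c] by simp
qed

lemma image_chain_path:
  assumes "linear \<pi>" "xs \<noteq> []"
  shows "(\<lambda>t. \<pi> (chain_path xs t)) ` {0..chain_length xs} = polyline (map \<pi> xs)"
  using assms(2)
proof (induction xs rule: induct_list012)
  case (3 x y r)
  define c where "c = cnorm (y - x)"
  define R where "R = chain_length (y # r)"
  have split: "{0..chain_length (x # y # r)} = {0..c} \<union> {c..c + R}"
    using cnorm_nonneg[of "y - x"] chain_length_nonneg[of "y # r"] by (auto simp: c_def R_def)
  have first: "(\<lambda>t. \<pi> (chain_path (x # y # r) t)) ` {0..c} = closed_segment (\<pi> x) (\<pi> y)"
    unfolding c_def by (rule image_chain_path_first_leg[OF assms(1)])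
  have "(\<lambda>t. \<pi> (chain_path (x # y # r) t)) ` {c..c + R} =
      (\<lambda>t. \<pi> (chain_path (y # r) t)) ` ((\<lambda>t. t - c) ` {c..c + R})"
    unfolding image_comp
    by (intro image_cong) (auto simp: chain_path_shift c_def simp del: chain_path.simps(1))
  also have "\<dots> = polyline (map \<pi> (y # r))"
    using "3.IH"(2) by (simp add: R_def)
  finally show ?case
    unfolding split image_Un first by simp
qed auto

lemma chain_path_mem_polyline: "xs \<noteq> [] \<Longrightarrow> t \<in> {0..chain_length xs} \<Longrightarrow> chain_path xs t \<in> polyline xs"
  using image_chain_path[OF linear_id, of xs] by auto

lemma polyline_subset_F2: "xs \<noteq> [] \<Longrightarrow> is_chain xs \<Longrightarrow> hd xs \<in> F2 \<Longrightarrow> polyline xs \<subseteq> F2"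
proof (induction xs rule: induct_list012)
  case (3 x y r)
  then obtain Q where "Q \<in> orderings" "x \<in> Q" "y \<in> Q"
    by auto
  then have "closed_segment x y \<subseteq> F2" "y \<in> F2"
    using convex_ordering ordering_subset_F2 by (blast dest: convex_contains_segment[THEN iffD1])+
  then show ?case
    using 3 by simp
qed auto

lemma trajectory_chain_path:
  assumes "linear \<pi>" "\<And>a b. l1dist (\<pi> a) (\<pi> b) \<le> cnorm (a - b)" "xs \<noteq> []"
  shows "trajectory (\<lambda>t. \<pi> (chain_path xs t)) 0 (chain_length xs)"
  unfolding trajectory_def
proof (intro conjI ballI)
  fix s t
  assume "s \<in> {0..chain_length xs}" "t \<in> {0..chain_length xs}"
  then show "l1dist (\<pi> (chain_path xs s)) (\<pi> (chain_path xs t)) \<le> \<bar>s - t\<bar>"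
    using assms(2) cnorm_lipschitz_on_chain_path[of xs] unfolding cnorm_lipschitz_on_def
    by (meson order.trans)
qed (simp_all add: chain_length_nonneg image_chain_path assms polygonal_chain_polyline)

lemma schedule_chain_path:
  assumes "xs \<noteq> []" "is_chain xs" "hd xs \<in> F2"
  shows "schedule_from_to (chain_path xs) 0 (chain_length xs) (hd xs) (last xs)"
  unfolding schedule_from_to_def feasible_schedule_def
proof (intro conjI ballI)
  show "trajectory (\<lambda>t. fst (chain_path xs t)) 0 (chain_length xs)"
    by (rule trajectory_chain_path[OF linear_fst l1dist_fst_le_cnorm assms(1)])
  show "trajectory (\<lambda>t. snd (chain_path xs t)) 0 (chain_length xs)"
    by (rule trajectory_chain_path[OF linear_snd l1dist_snd_le_cnorm assms(1)])
  show "chain_path xs t \<in> F2" if "t \<in> {0..chain_length xs}" for t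
    using chain_path_mem_polyline[OF assms(1) that] polyline_subset_F2[OF assms] by blast
qed (simp_all add: assms(1) chain_path_0 chain_path_chain_length)

lemma convex_line_preimage:
  fixes p v :: "'a::real_vector"
  assumes "convex Q"
  shows "convex {t::real. p + t *\<^sub>R v \<in> Q}"
proof (rule convexI)
  fix s t u w :: real
  assume "s \<in> {t. p + t *\<^sub>R v \<in> Q}" "t \<in> {t. p + t *\<^sub>R v \<in> Q}" and uw: "0 \<le> u" "0 \<le> w" "u + w = 1"
  then have "u *\<^sub>R (p + s *\<^sub>R v) + w *\<^sub>R (p + t *\<^sub>R v) \<in> Q"
    using assms by (intro convexD) auto
  moreover have "u *\<^sub>R (p + s *\<^sub>R v) + w *\<^sub>R (p + t *\<^sub>R v) = p + (u *\<^sub>R s + w *\<^sub>R t) *\<^sub>R v"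
    using uw(3) by (simp add: algebra_simps flip: scaleR_add_left)
  ultimately show "u *\<^sub>R s + w *\<^sub>R t \<in> {t. p + t *\<^sub>R v \<in> Q}"
    by simp
qed

text \<open>Both \<open>Q\<close> and its complement are convex, so \<open>Q\<close> meets every leg in a subsegment,
  and the chain path can only re-enter \<open>Q\<close> through a vertex in \<open>Q\<close>.\<close>

lemma is_interval_chain_path_preimage:
  assumes "convex Q" "convex (- Q)" "no_reentry Q xs" "xs \<noteq> []"
  shows "is_interval {t \<in> {0..chain_length xs}. chain_path xs t \<in> Q}"
  using assms(3,4)
proof (induction xs rule: induct_list012)
  case (3 x y r)
  define c where "c = cnorm (y - x)"
  define R where "R = chain_length (y # r)"
  define S where "S = {t \<in> {0..c + R}. chain_path (x # y # r) t \<in> Q}"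
  have c: "0 \<le> c" and R: "0 \<le> R"
    unfolding c_def R_def by (rule cnorm_nonneg chain_length_nonneg)+
  have shift: "chain_path (x # y # r) t = chain_path (y # r) (t - c)" if "c \<le> t" for t
    using that chain_path_shift by (simp add: c_def del: chain_path.simps(1))
  have leg: "chain_path (x # y # r) t \<in> closed_segment x y" if "t \<in> {0..c}" for t
    using imageI[OF that, of "\<lambda>t. id (chain_path (x # y # r) t)"]
    unfolding c_def image_chain_path_first_leg[OF linear_id] by simp
  have tail: "is_interval {t \<in> {0..R}. chain_path (y # r) t \<in> Q}"
    using 3 by (simp add: R_def)
  have in_first: "u \<in> S" if "a \<in> S" "b \<in> S" "a \<le> u" "u \<le> b" "b \<le> c" for a b u
  proof -
    have line: "chain_path (x # y # r) t = x + t *\<^sub>R ((1 / c) *\<^sub>R (y - x))" if "t \<le> c" for t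
      using that by (simp add: c_def)
    have "is_interval {t. x + t *\<^sub>R ((1 / c) *\<^sub>R (y - x)) \<in> Q}"
      using convex_line_preimage[OF assms(1)] is_interval_convex_1 by blast
    then have "x + u *\<^sub>R ((1 / c) *\<^sub>R (y - x)) \<in> Q"
      using that line[of a] line[of b] unfolding S_def is_interval_1 by auto
    then show ?thesis
      using that line[of u] unfolding S_def by auto
  qed
  have in_rest: "u \<in> S" if "a \<in> S" "b \<in> S" "a \<le> u" "u \<le> b" "c \<le> a" for a b u
  proof -
    have "a - c \<in> {t \<in> {0..R}. chain_path (y # r) t \<in> Q}"
      "b - c \<in> {t \<in> {0..R}. chain_path (y # r) t \<in> Q}"
      using that shift[of a] shift[of b] unfolding S_def by auto
    then have "u - c \<in> {t \<in> {0..R}. chain_path (y # r) t \<in> Q}"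
      using tail[unfolded is_interval_1, rule_format, of "a - c" "b - c" "u - c"] that by simp
    then show ?thesis
      using that shift[of u] unfolding S_def by auto
  qed
  have "is_interval S"
    unfolding is_interval_1
  proof (intro ballI allI impI)
    fix a b u
    assume a: "a \<in> S" and b: "b \<in> S" and u: "a \<le> u \<and> u \<le> b"
    consider "b \<le> c" | "c \<le> a" | "a < c" "c < b" "y \<in> Q" | "a < c" "c < b" "y \<notin> Q"
      by linarith
    then show "u \<in> S"
    proof cases
      case 3
      then have "c \<in> S"
        using shift[of c] c R by (simp add: S_def chain_path_0)
      then show ?thesis
        using in_first[OF a _ _ _ order.refl] in_rest[OF _ b _ _ order.refl] u by (meson linear)
    next
      case 4
      have "b - c \<in> {0..R}" "chain_path (y # r) (b - c) \<in> Q"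
        using b 4 shift[of b] unfolding S_def by auto
      then have "\<not> set (y # r) \<subseteq> - Q"
        using chain_path_mem_polyline[of "y # r" "b - c"] polyline_subset_convex_hull[of "y # r"]
          hull_minimal[of "set (y # r)" "- Q" convex] assms(2) by (auto simp: R_def)
      then have "x \<notin> Q"
        using "3.prems"(1) 4 by auto
      then have "closed_segment x y \<subseteq> - Q"
        using 4 assms(2) by (simp add: convex_contains_segment)
      then show ?thesis
        using a 4 leg[of a] unfolding S_def by auto
    qed (use in_first in_rest a b u in blast)+
  qed
  then show ?case
    by (simp add: S_def c_def R_def)
qed (auto simp: is_interval_1)

section \<open>The chain below a schedule\<close>

locale lipschitz_free_path =
  fixes \<gamma> :: "real \<Rightarrow> pt \<times> pt" and s0 s1 :: real
  assumes ordered: "s0 \<le> s1"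
    and lipschitz: "cnorm_lipschitz_on {s0..s1} \<gamma>"
    and free: "\<And>t. t \<in> {s0..s1} \<Longrightarrow> \<gamma> t \<in> F2"
begin

lemma continuous_path: "continuous_on {s0..s1} \<gamma>"
proof (rule lipschitz_on_continuous_on)
  show "2-lipschitz_on {s0..s1} \<gamma>"
  proof (rule lipschitz_onI)
    fix s t
    assume "s \<in> {s0..s1}" "t \<in> {s0..s1}"
    then have "cnorm (\<gamma> s - \<gamma> t) \<le> dist s t"
      using lipschitz by (simp add: cnorm_lipschitz_on_def dist_real_def)
    then show "dist (\<gamma> s) (\<gamma> t) \<le> 2 * dist s t"
      using norm_le_cnorm[of "\<gamma> s - \<gamma> t"] by (simp add: dist_norm)
  qed simp
qed

lemma closed_visits:
  assumes "U \<subseteq> orderings" "s0 \<le> a" "b \<le> s1"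
  shows "closed {t \<in> {a..b}. \<gamma> t \<in> \<Union>U}"
proof -
  have "closed (\<Union>U)"
    using assms(1) closed_ordering
    by (intro closed_Union finite_subset[OF assms(1) finite_orderings]) auto
  moreover have "continuous_on {a..b} \<gamma>"
    using assms(2,3) by (intro continuous_on_subset[OF continuous_path]) auto
  ultimately have "closed ({a..b} \<inter> \<gamma> -` \<Union>U)"
    by (intro continuous_closed_preimage) auto
  moreover have "{t \<in> {a..b}. \<gamma> t \<in> \<Union>U} = {a..b} \<inter> \<gamma> -` \<Union>U"
    by blast
  ultimately show ?thesis
    by simp
qed

lemma last_visit:
  assumes "Q \<in> orderings" "\<tau> \<in> {s0..s1}" "\<gamma> \<tau> \<in> Q"
  obtains \<tau>' where "\<tau>' \<in> {\<tau>..s1}" "\<gamma> \<tau>' \<in> Q" "\<And>t. t \<in> {\<tau>'<..s1} \<Longrightarrow> \<gamma> t \<notin> Q"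
proof -
  define T where "T = {t \<in> {\<tau>..s1}. \<gamma> t \<in> \<Union>{Q}}"
  have "closed T"
    unfolding T_def using assms by (intro closed_visits) auto
  moreover have "bounded T"
    by (rule bounded_subset[of "{\<tau>..s1}"]) (auto simp: T_def)
  moreover have "\<tau> \<in> T"
    using assms by (simp add: T_def)
  ultimately obtain \<tau>' where \<tau>': "\<tau>' \<in> T" "\<And>t. t \<in> T \<Longrightarrow> t \<le> \<tau>'"
    using compact_attains_sup[of T] compact_eq_bounded_closed by blast
  show ?thesis
  proof (rule that)
    show "\<tau>' \<in> {\<tau>..s1}" "\<gamma> \<tau>' \<in> Q"
      using \<tau>'(1) by (auto simp: T_def)
    show "\<gamma> t \<notin> Q" if "t \<in> {\<tau>'<..s1}" for t
    proof
      assume "\<gamma> t \<in> Q"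
      then have "t \<in> T"
        using that \<tau>'(1) by (auto simp: T_def)
      then show False
        using \<tau>'(2) that by fastforce
    qed
  qed
qed

lemma visits_left_endpoint:
  assumes "U \<subseteq> orderings" "\<tau> \<in> {s0..s1}" "\<tau> < s1" "\<And>t. t \<in> {\<tau><..s1} \<Longrightarrow> \<gamma> t \<in> \<Union>U"
  shows "\<gamma> \<tau> \<in> \<Union>U"
proof -
  have "closure {\<tau><..s1} \<subseteq> {t \<in> {\<tau>..s1}. \<gamma> t \<in> \<Union>U}"
    using assms closed_visits[of U \<tau> s1] by (intro closure_minimal) auto
  moreover have "\<tau> \<in> closure {\<tau><..s1}"
    using assms(3) by simp
  ultimately show ?thesis
    by blast
qed

text \<open>Greedy decomposition: stay in the current ordering until the path leaves it for the last
  time. From then on the path lies in the orderings not used so far; these are closed, so it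
  already lies in one of them at that time. Hence every ordering contributes at most one leg.\<close>

lemma chain_below_path:
  assumes "U \<subseteq> orderings" "Q \<in> U" "\<tau> \<in> {s0..s1}" "\<gamma> \<tau> \<in> Q" "\<And>t. t \<in> {\<tau><..s1} \<Longrightarrow> \<gamma> t \<in> \<Union>U"
  shows "\<exists>xs. xs \<noteq> [] \<and> hd xs = \<gamma> \<tau> \<and> last xs = \<gamma> s1 \<and> is_chain xs \<and>
    chain_length xs \<le> s1 - \<tau> \<and> length xs \<le> card U + 1"
  using assms
proof (induction "card U" arbitrary: U Q \<tau> rule: less_induct)
  case less
  have "finite U"
    by (rule finite_subset[OF less.prems(1) finite_orderings])
  then have card_U: "1 \<le> card U"
    using less.prems(2) by (metis One_nat_def Suc_leI card_gt_0_iff empty_iff)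
  have step: "cnorm (\<gamma> t - \<gamma> s) \<le> t - s" if "s \<in> {s0..s1}" "t \<in> {s0..s1}" "s \<le> t" for s t
    using lipschitz that unfolding cnorm_lipschitz_on_def by fastforce
  obtain \<tau>' where \<tau>': "\<tau>' \<in> {\<tau>..s1}" "\<gamma> \<tau>' \<in> Q" and left: "\<And>t. t \<in> {\<tau>'<..s1} \<Longrightarrow> \<gamma> t \<notin> Q"
    using last_visit[of Q \<tau>] less.prems by auto
  show ?case
  proof (cases "\<tau>' = s1")
    case True
    then show ?thesis
      using less.prems \<tau>' card_U step[of \<tau> s1]
      by (intro exI[of _ "[\<gamma> \<tau>, \<gamma> s1]"]) auto
  next
    case False
    define U' where "U' = U - {Q}"
    have later: "\<gamma> t \<in> \<Union>U'" if "t \<in> {\<tau>'<..s1}" for t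
      using less.prems(5)[of t] left[OF that] \<tau>' that by (auto simp: U'_def)
    obtain Q' where Q': "Q' \<in> U'" "\<gamma> \<tau>' \<in> Q'"
      using visits_left_endpoint[of U' \<tau>'] later less.prems(1,3) \<tau>' False by (auto simp: U'_def)
    have card_U': "card U' + 1 = card U"
      using \<open>finite U\<close> less.prems(2) card_U by (simp add: U'_def)
    obtain ys where ys: "ys \<noteq> []" "hd ys = \<gamma> \<tau>'" "last ys = \<gamma> s1" "is_chain ys"
        "chain_length ys \<le> s1 - \<tau>'" "length ys \<le> card U' + 1"
      using less.hyps[of U' Q' \<tau>'] card_U' Q' later less.prems(1,3) \<tau>' by (auto simp: U'_def)
    then obtain r where r: "ys = \<gamma> \<tau>' # r"
      by (cases ys) auto
    have "Q \<in> orderings"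
      using less.prems(1,2) by blast
    then have "is_chain (\<gamma> \<tau> # ys)"
      using ys(4) r less.prems(4) \<tau>'(2) by auto
    moreover have "chain_length (\<gamma> \<tau> # ys) \<le> s1 - \<tau>"
      using step[of \<tau> \<tau>'] less.prems(3) \<tau>'(1) ys(5) r by simp
    ultimately show ?thesis
      using ys r card_U' by (intro exI[of _ "\<gamma> \<tau> # ys"]) simp
  qed
qed

lemma short_chain_below_path:
  "\<exists>xs. xs \<noteq> [] \<and> hd xs = \<gamma> s0 \<and> last xs = \<gamma> s1 \<and> is_chain xs \<and>
    chain_length xs \<le> s1 - s0 \<and> length xs \<le> 5"
proof -
  obtain Q where "Q \<in> orderings" "\<gamma> s0 \<in> Q"
    using free[of s0] ordered by (auto simp: F2_eq_Union_orderings)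
  then show ?thesis
    using chain_below_path[of orderings Q s0] free ordered card_orderings_le
    by (fastforce simp: F2_eq_Union_orderings)
qed

end

lemma lipschitz_free_path_schedule:
  assumes "schedule_from_to M s0 s1 A B"
  shows "lipschitz_free_path M s0 s1"
proof
  have traj: "trajectory (\<lambda>t. fst (M t)) s0 s1" "trajectory (\<lambda>t. snd (M t)) s0 s1"
    using assms by (auto simp: schedule_from_to_def feasible_schedule_def)
  then show "s0 \<le> s1"
    by (simp add: trajectory_def)
  show "cnorm_lipschitz_on {s0..s1} M"
    using traj unfolding cnorm_lipschitz_on_def trajectory_def cnorm_def l1dist_eq_l1norm by simp
  show "M t \<in> F2" if "t \<in> {s0..s1}" for t
    using assms that by (simp add: schedule_from_to_def feasible_schedule_def)
qed

section \<open>Shortest chains\<close>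

definition chains :: "pt \<times> pt \<Rightarrow> pt \<times> pt \<Rightarrow> nat \<Rightarrow> (pt \<times> pt) list set" where
  "chains A B n = {xs. length xs = n \<and> hd xs = A \<and> last xs = B \<and> is_chain xs}"

lemma chain_below_schedule:
  assumes "schedule_from_to M s0 s1 A B"
  shows "\<exists>xs\<in>chains A B 5. chain_length xs \<le> s1 - s0"
proof -
  interpret lipschitz_free_path M s0 s1
    using assms by (rule lipschitz_free_path_schedule)
  have ends: "M s0 = A" "M s1 = B"
    using assms by (auto simp: schedule_from_to_def)
  obtain xs where xs: "xs \<noteq> []" "hd xs = A" "last xs = B" "is_chain xs" "chain_length xs \<le> s1 - s0"
    "length xs \<le> 5"
    using short_chain_below_path ends by auto
  have "B \<in> F2"
    using free[of s1] ordered ends by simp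
  then have "xs @ replicate (5 - length xs) B \<in> chains A B 5"
    using xs pad_chain(1)[of xs] by (auto simp: chains_def last_append)
  moreover have "chain_length (xs @ replicate (5 - length xs) B) \<le> s1 - s0"
    using xs pad_chain(2)[of xs] \<open>B \<in> F2\<close> by auto
  ultimately show ?thesis
    by blast
qed

lemma chains_5_nonempty:
  assumes "A \<in> F2" "B \<in> F2"
  shows "chains A B 5 \<noteq> {}"
proof -
  obtain Qa Qb where Q: "Qa \<in> orderings" "A \<in> Qa" "Qb \<in> orderings" "B \<in> Qb"
    using assms by (auto simp: F2_eq_Union_orderings)
  then obtain R p q where "R \<in> orderings" "p \<in> Qa \<inter> R" "q \<in> R \<inter> Qb"
    using orderings_common_neighbour[of Qa Qb] by blast
  then have "[A, p, q, B, B] \<in> chains A B 5"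
    using Q by (auto simp: chains_def)
  then show ?thesis
    by blast
qed

lemma closed_share_ordering:
  assumes "continuous_on UNIV f" "continuous_on UNIV g"
  shows "closed {p. \<exists>Q\<in>orderings. f p \<in> Q \<and> g p \<in> Q}"
proof -
  have "{p. \<exists>Q\<in>orderings. f p \<in> Q \<and> g p \<in> Q} = (\<Union>Q\<in>orderings. f -` Q \<inter> g -` Q)"
    by blast
  moreover have "closed (f -` Q \<inter> g -` Q)" if "Q \<in> orderings" for Q
    using assms closed_ordering[OF that] by (intro closed_Int closed_vimage)
  ultimately show ?thesis
    using finite_orderings by (simp add: closed_UN)
qed

lemma chains_5_has_shortest:
  assumes "chains A B 5 \<noteq> {}"
  shows "\<exists>xs\<in>chains A B 5. \<forall>ys\<in>chains A B 5. chain_length xs \<le> chain_length ys"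
proof -
  define through where "through p = [A, fst p, fst (snd p), snd (snd p), B]"
    for p :: "(pt \<times> pt) \<times> (pt \<times> pt) \<times> (pt \<times> pt)"
  define f where "f p = chain_length (through p)" for p
  have chains_eq: "chains A B 5 = through ` {p. is_chain (through p)}"
  proof (intro equalityI subsetI)
    fix xs
    assume "xs \<in> chains A B 5"
    then obtain a b c where "xs = [A, a, b, c, B]" "is_chain xs"
      by (auto simp: chains_def numeral_eq_Suc length_Suc_conv)
    then have "xs = through (a, b, c)" "is_chain (through (a, b, c))"
      by (simp_all add: through_def)
    then show "xs \<in> through ` {p. is_chain (through p)}"
      by (intro rev_image_eqI[of "(a, b, c)"]) simp_all
  qed (auto simp: chains_def through_def)
  obtain p0 where p0: "is_chain (through p0)"
    using assms chains_eq by auto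
  define K where "K = {p. is_chain (through p)} \<inter> {p. f p \<le> f p0}"
  have f_cont: "continuous_on UNIV f"
    unfolding f_def through_def by (simp add: continuous_intros)
  have "closed K"
    unfolding K_def through_def is_chain_simps Collect_conj_eq Collect_const
      if_P[OF is_chain_simps(2)] Int_UNIV_right
    by (intro closed_Int closed_share_ordering closed_Collect_le f_cont continuous_intros)
  moreover have "bounded K"
  proof (rule bounded_subset)
    show "bounded (cball A (2 * f p0) \<times> cball A (2 * f p0) \<times> cball A (2 * f p0))"
      by (intro bounded_Times bounded_cball)
    have "dist A z \<le> 2 * f p0" if "p \<in> K" "z \<in> set (through p)" for p z
    proof -
      have "cnorm (z - A) \<le> f p0"
        using cnorm_le_chain_length[OF that(2)] that(1) by (simp add: K_def f_def through_def)
      then show ?thesis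
        using norm_le_cnorm[of "z - A"] by (simp add: dist_norm norm_minus_commute)
    qed
    then show "K \<subseteq> cball A (2 * f p0) \<times> cball A (2 * f p0) \<times> cball A (2 * f p0)"
      by (force simp: through_def)
  qed
  moreover have "p0 \<in> K"
    using p0 by (simp add: K_def)
  ultimately obtain p where p: "p \<in> K" "\<And>q. q \<in> K \<Longrightarrow> f p \<le> f q"
    using continuous_attains_inf[of K f] continuous_on_subset[OF f_cont] compact_eq_bounded_closed
    by blast
  have "f p \<le> f q" if "is_chain (through q)" for q
    using p that by (cases "f q \<le> f p0") (auto simp: K_def)
  then have "\<forall>ys\<in>chains A B 5. chain_length (through p) \<le> chain_length ys"
    unfolding chains_eq f_def by blast
  moreover have "through p \<in> chains A B 5"
    using p(1) by (simp add: chains_eq K_def)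
  ultimately show ?thesis
    by blast
qed

text \<open>Replacing an excursion out of an ordering by a pause followed by a single leg inside the
  ordering removes a move without making the chain longer.\<close>

lemma fewest_moves_no_reentry:
  assumes xs: "xs \<in> chains A B n"
    and fewest: "\<forall>ys\<in>chains A B n. chain_length ys \<le> chain_length xs \<longrightarrow> moves xs \<le> moves ys"
    and Q: "Q \<in> orderings"
  shows "no_reentry Q xs"
proof (rule ccontr)
  assume "\<not> no_reentry Q xs"
  then obtain us x ms y ws
    where split: "xs = us @ x # ms @ y # ws" and "x \<in> Q" "y \<in> Q" "\<not> set ms \<subseteq> Q"
    using reentry_split by blast
  define xs' where "xs' = us @ x # replicate (length ms) x @ y # ws"
  have "is_chain xs'" "chain_length xs' \<le> chain_length xs" "moves xs' < moves xs"
    using shortcut_chain[of us x ms y ws Q] xs Q \<open>x \<in> Q\<close> \<open>y \<in> Q\<close> \<open>\<not> set ms \<subseteq> Q\<close>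
    unfolding split xs'_def by (auto simp: chains_def)
  moreover have "xs' \<in> chains A B n"
    using xs \<open>is_chain xs'\<close> unfolding split xs'_def by (auto simp: chains_def hd_append)
  ultimately show False
    using fewest by fastforce
qed

lemma exists_shortest_chain_no_reentry:
  assumes "A \<in> F2" "B \<in> F2"
  shows "\<exists>xs\<in>chains A B 5. (\<forall>ys\<in>chains A B 5. chain_length xs \<le> chain_length ys) \<and>
    (\<forall>Q\<in>orderings. no_reentry Q xs)"
proof -
  define shortest where
    "shortest xs \<longleftrightarrow> xs \<in> chains A B 5 \<and> (\<forall>ys\<in>chains A B 5. chain_length xs \<le> chain_length ys)" for xs
  obtain xs0 where "shortest xs0"
    using chains_5_has_shortest[OF chains_5_nonempty[OF assms]] by (auto simp: shortest_def)
  then obtain xs where xs: "shortest xs" and fewest: "\<And>ys. shortest ys \<Longrightarrow> moves xs \<le> moves ys"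
    using ex_has_least_nat[of shortest xs0 moves] by blast
  have "\<forall>ys\<in>chains A B 5. chain_length ys \<le> chain_length xs \<longrightarrow> moves xs \<le> moves ys"
    using xs fewest unfolding shortest_def by force
  then show ?thesis
    using xs fewest_moves_no_reentry[of xs A B 5] unfolding shortest_def by blast
qed

theorem corollary3p2:
  assumes "A \<in> F2" and "B \<in> F2"
  shows "\<exists>M t0 t1. schedule_from_to M t0 t1 A B \<and>
           (\<forall>M' s0 s1. schedule_from_to M' s0 s1 A B \<longrightarrow> t1 - t0 \<le> s1 - s0) \<and>
           (\<forall>Ord\<in>orderings. {t\<in>{t0..t1}. M t \<in> Ord} = {} \<or> is_interval {t\<in>{t0..t1}. M t \<in> Ord})"
proof -
  obtain xs where xs: "xs \<in> chains A B 5"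
    and shortest: "\<forall>ys\<in>chains A B 5. chain_length xs \<le> chain_length ys"
    and xs_no_reentry: "\<forall>Q\<in>orderings. no_reentry Q xs"
    using exists_shortest_chain_no_reentry[OF assms] by blast
  have "xs \<noteq> []" "hd xs = A" "last xs = B" "is_chain xs"
    using xs by (auto simp: chains_def)
  then have "schedule_from_to (chain_path xs) 0 (chain_length xs) A B"
    using schedule_chain_path assms(1) by metis
  moreover have "chain_length xs - 0 \<le> s1 - s0" if "schedule_from_to M' s0 s1 A B" for M' s0 s1
    using chain_below_schedule[OF that] shortest by fastforce
  moreover have "is_interval {t \<in> {0..chain_length xs}. chain_path xs t \<in> Q}"
    if "Q \<in> orderings" for Q
    using is_interval_chain_path_preimage convex_ordering convex_Compl_ordering xs_no_reentry that
      \<open>xs \<noteq> []\<close>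
    by blast
  ultimately show ?thesis
    by blast
qed

end
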